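(* Let $f:[a,b]\to\mathbb F$ and $h:[a,b]\to\mathbb F$, $h(t)=f(t)\Delta g(t)$. Let \[D_1=\{t\in[a,b]\cap N_g^-: t\in (D_g\cap[a,t))'\},\quad D_2=\{t\in[a,b]\cap N_g^+: t\in (D_g\cap(t,b])'\},\] \[D_3=\{t\in[a,b]\setminus (N_g\cup D_g): t\in (D_g\cap[a,b])'\}.\] For $t\in[a,b]$: 1. If $t^*\in D_1\cup D_2\cup D_3$, then $h$ is $g$-differentiable at $t$ if and only if $\displaystyle\lim_{s\to t^*,\ s\in D_g}\frac{f(s)\Delta g(s)}{g(s)-g(t)}=0$, where the limit is the left-hand one if $t^*\in N_g^-$ and the right-hand one if $t^*\in N_g^+$. 2. If $t^*\in D_g\cap (D_g\cap(t,b])'$, then $h$ is $g$-differentiable at $t$ if and only if $\displaystyle\lim_{s\to t^{*+},\ s\in D_g}f(s)\Delta g(s)=0$. 3. In any other case, $h$ is $g$-differentiable at $t$. Moreover, if $h$ is $g$-differentiable at $t$, then $h'_g(t)=-f(t^* )\chi_{D_g}(t^* )$.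
   Context: Let $g:\mathbb R\to\mathbb R$ be nondecreasing and left-continuous, and $\mathbb F\in\{\mathbb R,\mathbb C\}$. $\Delta g(t)=g(t^+)-g(t)$, $D_g=\{t:\Delta g(t)>0\}$, $C_g=\{t: g\text{ constant on }(t-\varepsilon,t+\varepsilon)\text{ for some }\varepsilon>0\}=\bigcup_{n\in\Lambda}(a_n,b_n)$ (disjoint union of connected components), $N_g^-=\{a_n:n\in\Lambda\}\setminus D_g$, $N_g^+=\{b_n:n\in\Lambda\}\setminus D_g$, $N_g=N_g^-\cup N_g^+$. Fix $a<b$ with $a\notin N_g^-$, $b\notin D_g\cup C_g\cup N_g^+$. For $t\in[a,b]$, $t^*=t$ if $t\notin C_g$ and $t^*=b_n$ if $t\in(a_n,b_n)$. The $g$-derivative of $u:[a,b]\to\mathbb F$ at $t$ is $u'_g(t)=\lim_{s\to t}\frac{u(s)-u(t)}{g(s)-g(t)}$ if $t\notin D_g\cup C_g$ and $u'_g(t)=\lim_{s\to t^{*+}}\frac{u(s)-u(t^* )}{g(s)-g(t^* )}$ if $t\in D_g\cup C_g$, provided the finite limit exists ($u$ is then $g$-differentiable at $t$); limits are over $s\in[a,b]$ with nonzero denominator, and at points of $N_g^+\cup\{a\}$ only the right-hand limit, at points of $N_g^-\cup\{b\}$ only the left-hand limit is taken. $X'$ denotes the set of accumulation points of $X\subset\mathbb R$, and $\chi_{D_g}$ is the indicator function of $D_g$. *)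

theory Defs
  imports "HOL-Analysis.Analysis"
begin

text \<open>Stieltjes-type (g-)derivatives. Throughout, g is nondecreasing and left-continuous;
  the right limit g(t+) exists by monotonicity.\<close>

definition jump :: "(real \<Rightarrow> real) \<Rightarrow> real \<Rightarrow> real" where
  "jump g t = Lim (at_right t) g - g t"

definition Dg :: "(real \<Rightarrow> real) \<Rightarrow> real set" where
  "Dg g = {t. jump g t > 0}"

definition Cg :: "(real \<Rightarrow> real) \<Rightarrow> real set" where
  "Cg g = {t. \<exists>e>0. \<forall>s\<in>{t-e<..<t+e}. g s = g t}"

definition Nminus :: "(real \<Rightarrow> real) \<Rightarrow> real set" where
  "Nminus g = {Inf c | c. c \<in> components (Cg g) \<and> bdd_below c} - Dg g"

definition Nplus :: "(real \<Rightarrow> real) \<Rightarrow> real set" where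
  "Nplus g = {Sup c | c. c \<in> components (Cg g) \<and> bdd_above c} - Dg g"

definition Ng :: "(real \<Rightarrow> real) \<Rightarrow> real set" where
  "Ng g = Nminus g \<union> Nplus g"

definition tstar :: "(real \<Rightarrow> real) \<Rightarrow> real \<Rightarrow> real" where
  "tstar g t = (if t \<in> Cg g then Sup (connected_component_set (Cg g) t) else t)"

text \<open>The limit is
  required to be a genuine limit (the filter is nontrivial).\<close>
definition has_g_deriv ::
  "(real \<Rightarrow> real) \<Rightarrow> real \<Rightarrow> real \<Rightarrow> (real \<Rightarrow> 'a::real_normed_field) \<Rightarrow> real \<Rightarrow> 'a \<Rightarrow> bool" where
  "has_g_deriv g a b u t L =
    (if t \<in> Dg g \<union> Cg g then
       (let T = tstar g t;
            F = at T within ({a..b} \<inter> {s. g s \<noteq> g T} \<inter> {T<..})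
        in F \<noteq> bot \<and> ((\<lambda>s. (u s - u T) / of_real (g s - g T)) \<longlongrightarrow> L) F)
     else
       (let F = at t within ({a..b} \<inter> {s. g s \<noteq> g t}
                   \<inter> (if t \<in> Nplus g \<union> {a} then {t..} else UNIV)
                   \<inter> (if t \<in> Nminus g \<union> {b} then {..t} else UNIV))
        in F \<noteq> bot \<and> ((\<lambda>s. (u s - u t) / of_real (g s - g t)) \<longlongrightarrow> L) F))"

definition g_differentiable ::
  "(real \<Rightarrow> real) \<Rightarrow> real \<Rightarrow> real \<Rightarrow> (real \<Rightarrow> 'a::real_normed_field) \<Rightarrow> real \<Rightarrow> bool" where
  "g_differentiable g a b u t = (\<exists>L. has_g_deriv g a b u t L)"

definition g_deriv ::
  "(real \<Rightarrow> real) \<Rightarrow> real \<Rightarrow> real \<Rightarrow> (real \<Rightarrow> 'a::real_normed_field) \<Rightarrow> real \<Rightarrow> 'a" where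
  "g_deriv g a b u t = (THE L. has_g_deriv g a b u t L)"

end

(* Write T for t*.  Outside D_g the function h vanishes, and D_g is countable, so every
   one-sided neighbourhood of T contains points where the difference quotient of h is 0 if T is
   not in D_g, and is -h(T)/(g(s) - g(T)), which tends to -f(T), if T is in D_g.  Off D_g the
   increment g(s) - g(T) does not vanish on the side from which the g-derivative is taken
   (left at N_g^-, right at N_g^+, both sides otherwise), because there g is not locally
   constant; so the only possible value of the g-derivative is -f(T) chi_{D_g}(T), and it is
   attained iff the quotient also tends to it along D_g, which is automatic unless T is a limit
   point of D_g from that side. *)
theory Submission
  imports Defs
begin

lemma tendsto_within_not_islimpt: "\<not> x islimpt S \<Longrightarrow> (f \<longlongrightarrow> l) (at x within S)"
  using trivial_limit_within[of x S] by simp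

lemma tendsto_within_vanishing_off_iff:
  fixes q :: "'b::topological_space \<Rightarrow> 'a::real_normed_vector"
  assumes vanish: "\<And>s. s \<in> X \<Longrightarrow> s \<notin> A \<Longrightarrow> q s = 0" and limpt: "x islimpt (X - A)"
  shows "(at x within X \<noteq> bot \<and> (q \<longlongrightarrow> L) (at x within X)) \<longleftrightarrow>
         L = 0 \<and> (q \<longlongrightarrow> 0) (at x within X \<inter> A)"
proof -
  have nontriv: "at x within (X - A) \<noteq> bot"
    using limpt trivial_limit_within by blast
  have q0: "(q \<longlongrightarrow> 0) (at x within (X - A))"
    by (rule tendsto_eventually) (simp add: eventually_at_filter vanish)
  show ?thesis
  proof
    assume "at x within X \<noteq> bot \<and> (q \<longlongrightarrow> L) (at x within X)"
    then have "(q \<longlongrightarrow> L) (at x within X \<inter> A)" "(q \<longlongrightarrow> L) (at x within (X - A))"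
      by (auto intro: tendsto_within_subset)
    with q0 nontriv show "L = 0 \<and> (q \<longlongrightarrow> 0) (at x within X \<inter> A)"
      using tendsto_unique by blast
  next
    assume *: "L = 0 \<and> (q \<longlongrightarrow> 0) (at x within X \<inter> A)"
    have "at x within X \<noteq> bot"
      using limpt islimpt_subset[of x "X - A" X] trivial_limit_within by blast
    moreover have "(q \<longlongrightarrow> 0) (at x within (X \<inter> A) \<union> (X - A))"
      using * q0 by (simp add: Lim_within_Un)
    moreover have "(X \<inter> A) \<union> (X - A) = X"
      by blast
    ultimately show "at x within X \<noteq> bot \<and> (q \<longlongrightarrow> L) (at x within X)"
      using * by simp
  qed
qed

lemma tendsto_difference_quotient_iff:
  fixes u :: "'b \<Rightarrow> 'a::real_normed_field" and d :: "'b \<Rightarrow> real"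
  assumes d: "(d \<longlongrightarrow> J) F" "J \<noteq> 0" and nonzero: "\<forall>\<^sub>F s in F. d s \<noteq> 0"
  shows "((\<lambda>s. (u s - c) / of_real (d s)) \<longlongrightarrow> L) F \<longleftrightarrow> (u \<longlongrightarrow> c + L * of_real J) F"
proof
  assume quot: "((\<lambda>s. (u s - c) / of_real (d s)) \<longlongrightarrow> L) F"
  have "((\<lambda>s. c + (u s - c) / of_real (d s) * of_real (d s)) \<longlongrightarrow> c + L * of_real J) F"
    by (intro tendsto_intros quot d)
  moreover have "\<forall>\<^sub>F s in F. c + (u s - c) / of_real (d s) * of_real (d s) = u s"
    using nonzero by eventually_elim simp
  ultimately show "(u \<longlongrightarrow> c + L * of_real J) F"
    by (rule Lim_transform_eventually)
next
  assume "(u \<longlongrightarrow> c + L * of_real J) F"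
  then have "((\<lambda>s. (u s - c) / of_real (d s)) \<longlongrightarrow> (c + L * of_real J - c) / of_real J) F"
    using d by (intro tendsto_intros) auto
  with d(2) show "((\<lambda>s. (u s - c) / of_real (d s)) \<longlongrightarrow> L) F"
    by simp
qed

lemma at_within_eq_if_Diff_eq: "A - {x} = B - {x} \<Longrightarrow> at x within A = at x within B"
  by (simp add: at_within_def)

lemma islimpt_Ioo_diff_countable:
  fixes C :: "real set"
  assumes "countable C" "x < y"
  shows "x islimpt ({x<..<y} - C)" "y islimpt ({x<..<y} - C)"
proof -
  have avoid: "\<exists>z\<in>{u<..<v}. z \<notin> C" if "u < v" for u v
  proof (rule ccontr)
    assume "\<not> (\<exists>z\<in>{u<..<v}. z \<notin> C)"
    then have "countable {u<..<v}"
      using assms(1) countable_subset[of "{u<..<v}" C] by auto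
    with \<open>u < v\<close> show False
      using uncountable_open_interval[of u v] by simp
  qed
  show "x islimpt ({x<..<y} - C)"
    unfolding islimpt_approachable
  proof (intro allI impI)
    fix e :: real assume "e > 0"
    then obtain z where "z \<in> {x<..<min y (x + e)}" "z \<notin> C"
      using avoid[of x "min y (x + e)"] assms(2) by auto
    then show "\<exists>z\<in>{x<..<y} - C. z \<noteq> x \<and> dist z x < e"
      by (intro bexI[of _ z]) (auto simp: dist_real_def)
  qed
  show "y islimpt ({x<..<y} - C)"
    unfolding islimpt_approachable
  proof (intro allI impI)
    fix e :: real assume "e > 0"
    then obtain z where "z \<in> {max x (y - e)<..<y}" "z \<notin> C"
      using avoid[of "max x (y - e)" y] assms(2) by auto
    then show "\<exists>z\<in>{x<..<y} - C. z \<noteq> y \<and> dist z y < e"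
      by (intro bexI[of _ z]) (auto simp: dist_real_def)
  qed
qed

section \<open>Components of open sets of reals\<close>

lemma connected_Ico_Sup_subset:
  fixes c :: "real set"
  assumes "connected c" "bdd_above c" "y \<in> c"
  shows "{y..<Sup c} \<subseteq> c"
proof
  fix z assume z: "z \<in> {y..<Sup c}"
  then obtain w where "w \<in> c" "z < w"
    using less_cSupD[of c z] assms(3) by auto
  with z show "z \<in> c"
    using connected_contains_Icc[OF assms(1,3) \<open>w \<in> c\<close>] by auto
qed

lemma connected_Ioc_Inf_subset:
  fixes c :: "real set"
  assumes "connected c" "bdd_below c" "y \<in> c"
  shows "{Inf c<..y} \<subseteq> c"
proof
  fix z assume z: "z \<in> {Inf c<..y}"
  then obtain w where "w \<in> c" "w < z"
    using cInf_lessD[of c z] assms(3) by auto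
  with z show "z \<in> c"
    using connected_contains_Icc[OF assms(1) \<open>w \<in> c\<close> assms(3)] by auto
qed

lemma Sup_component_notin:
  fixes U :: "real set"
  assumes "open U" "c \<in> components U" "bdd_above c"
  shows "Sup c \<notin> U"
proof
  assume "Sup c \<in> U"
  have "open c" "c \<noteq> {}"
    using assms(1,2) open_components in_components_nonempty by auto
  have "Sup c \<notin> c"
  proof
    assume "Sup c \<in> c"
    then obtain e where "e > 0" "ball (Sup c) e \<subseteq> c"
      using \<open>open c\<close> openE by blast
    then have "Sup c + e / 2 \<in> c"
      by (auto simp: dist_real_def)
    then show False
      using cSup_upper[OF _ assms(3)] \<open>e > 0\<close> by fastforce
  qed
  then have "Sup c \<in> frontier c"
    using closure_contains_Sup[OF \<open>c \<noteq> {}\<close> assms(3)] \<open>open c\<close>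
    by (simp add: frontier_def interior_open)
  then have "Sup c \<in> frontier U"
    using frontier_of_components_subset[OF assms(2)] by blast
  with \<open>Sup c \<in> U\<close> assms(1) show False
    by (simp add: frontier_def interior_open)
qed

lemma Inf_component_notin:
  fixes U :: "real set"
  assumes "open U" "c \<in> components U" "bdd_below c"
  shows "Inf c \<notin> U"
proof
  assume "Inf c \<in> U"
  have "open c" "c \<noteq> {}"
    using assms(1,2) open_components in_components_nonempty by auto
  have "Inf c \<notin> c"
  proof
    assume "Inf c \<in> c"
    then obtain e where "e > 0" "ball (Inf c) e \<subseteq> c"
      using \<open>open c\<close> openE by blast
    then have "Inf c - e / 2 \<in> c"
      by (auto simp: dist_real_def)
    then show False
      using cInf_lower[OF _ assms(3)] \<open>e > 0\<close> by fastforce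
  qed
  then have "Inf c \<in> frontier c"
    using closure_contains_Inf[OF \<open>c \<noteq> {}\<close> assms(3)] \<open>open c\<close>
    by (simp add: frontier_def interior_open)
  then have "Inf c \<in> frontier U"
    using frontier_of_components_subset[OF assms(2)] by blast
  with \<open>Inf c \<in> U\<close> assms(1) show False
    by (simp add: frontier_def interior_open)
qed

lemma Sup_connected_component_eq:
  fixes U :: "real set"
  assumes "x \<notin> U" "{y<..<x} \<subseteq> U" "z \<in> {y<..<x}"
  shows "bdd_above (connected_component_set U z)" "Sup (connected_component_set U z) = x"
proof -
  let ?c = "connected_component_set U z"
  have sub: "{y<..<x} \<subseteq> ?c"
    using assms(2,3) by (intro connected_component_maximal) auto
  have less: "w < x" if "w \<in> ?c" for w
  proof (rule ccontr)
    assume "\<not> w < x"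
    then have "x \<in> {z..w}"
      using assms(3) by auto
    moreover have "z \<in> ?c"
      using sub assms(3) by blast
    ultimately have "x \<in> ?c"
      using connected_contains_Icc[OF connected_connected_component _ that] by blast
    then show False
      using assms(1) connected_component_subset by blast
  qed
  then show bdd: "bdd_above ?c"
    by (meson bdd_aboveI less_imp_le)
  have "x \<le> Sup ?c"
    using cSup_subset_mono[OF _ bdd sub] assms(3) by auto
  moreover have "Sup ?c \<le> x"
    using less assms(3) sub by (intro cSup_least) (auto intro: less_imp_le)
  ultimately show "Sup ?c = x"
    by simp
qed

lemma Inf_connected_component_eq:
  fixes U :: "real set"
  assumes "x \<notin> U" "{x<..<y} \<subseteq> U" "z \<in> {x<..<y}"
  shows "bdd_below (connected_component_set U z)" "Inf (connected_component_set U z) = x"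
proof -
  let ?c = "connected_component_set U z"
  have sub: "{x<..<y} \<subseteq> ?c"
    using assms(2,3) by (intro connected_component_maximal) auto
  have greater: "x < w" if "w \<in> ?c" for w
  proof (rule ccontr)
    assume "\<not> x < w"
    then have "x \<in> {w..z}"
      using assms(3) by auto
    moreover have "z \<in> ?c"
      using sub assms(3) by blast
    ultimately have "x \<in> ?c"
      using connected_contains_Icc[OF connected_connected_component that] by blast
    then show False
      using assms(1) connected_component_subset by blast
  qed
  then show bdd: "bdd_below ?c"
    by (meson bdd_belowI less_imp_le)
  have "Inf ?c \<le> x"
    using cInf_superset_mono[OF _ bdd sub] assms(3) by auto
  moreover have "x \<le> Inf ?c"
    using greater assms(3) sub by (intro cInf_greatest) (auto intro: less_imp_le)
  ultimately show "Inf ?c = x"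
    by simp
qed

section \<open>The set where g is locally constant\<close>

lemma Cg_iff_eventually_nhds: "x \<in> Cg g \<longleftrightarrow> (\<forall>\<^sub>F s in nhds x. g s = g x)"
proof -
  have "s \<in> {x - e<..<x + e} \<longleftrightarrow> dist s x < e" for s e
    by (auto simp: dist_real_def abs_less_iff)
  then show ?thesis
    unfolding Cg_def eventually_nhds_metric Ball_def mem_Collect_eq by presburger
qed

lemma Cg_iff_eventually_left_right:
  "x \<in> Cg g \<longleftrightarrow> (\<forall>\<^sub>F s in at_left x. g s = g x) \<and> (\<forall>\<^sub>F s in at_right x. g s = g x)"
  by (simp add: Cg_iff_eventually_nhds eventually_nhds_conv_at eventually_at_split)

lemma open_subset_Cg:
  assumes "open S" "\<And>s. s \<in> S \<Longrightarrow> g s = k"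
  shows "S \<subseteq> Cg g"
proof
  fix s assume "s \<in> S"
  have "\<forall>\<^sub>F u in nhds s. u \<in> S"
    using assms(1) \<open>s \<in> S\<close> by (rule eventually_nhds_in_open)
  then have "\<forall>\<^sub>F u in nhds s. g u = g s"
    by eventually_elim (use \<open>s \<in> S\<close> in \<open>simp add: assms(2)\<close>)
  then show "s \<in> Cg g"
    by (simp add: Cg_iff_eventually_nhds)
qed

lemma open_Cg: "open (Cg g)"
  unfolding open_subopen[of "Cg g"]
proof
  fix x assume "x \<in> Cg g"
  then obtain e where "e > 0" and const: "\<forall>s\<in>{x - e<..<x + e}. g s = g x"
    unfolding Cg_def by blast
  have "{x - e<..<x + e} \<subseteq> Cg g"
  proof (rule open_subset_Cg)
    show "open {x - e<..<x + e}"
      by simp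
    show "g s = g x" if "s \<in> {x - e<..<x + e}" for s
      using const that by blast
  qed
  moreover have "open {x - e<..<x + e}" "x \<in> {x - e<..<x + e}"
    using \<open>e > 0\<close> by auto
  ultimately show "\<exists>T. open T \<and> x \<in> T \<and> T \<subseteq> Cg g"
    by blast
qed

lemma Cg_connected_const:
  assumes "connected c" "c \<subseteq> Cg g" "y \<in> c" "z \<in> c"
  shows "g y = g z"
proof -
  have "g constant_on c"
  proof (rule locally_constant_imp_constant[OF assms(1)])
    fix x assume "x \<in> c"
    with assms(2) have "x \<in> Cg g"
      by blast
    then obtain e where "e > 0" and const: "\<forall>s\<in>{x - e<..<x + e}. g s = g x"
      unfolding Cg_def by blast
    show "\<exists>T. openin (top_of_set c) T \<and> x \<in> T \<and> (\<forall>s\<in>T. g s = g x)"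
    proof (intro exI[of _ "c \<inter> {x - e<..<x + e}"] conjI)
      show "openin (top_of_set c) (c \<inter> {x - e<..<x + e})"
        by (rule openin_open_Int) simp
      show "x \<in> c \<inter> {x - e<..<x + e}"
        using \<open>x \<in> c\<close> \<open>e > 0\<close> by simp
      show "\<forall>s\<in>c \<inter> {x - e<..<x + e}. g s = g x"
        using const by blast
    qed
  qed
  then show ?thesis
    using assms(3,4) unfolding constant_on_def by metis
qed

section \<open>Nondecreasing left-continuous functions\<close>

locale mono_left_continuous =
  fixes g :: "real \<Rightarrow> real"
  assumes mono: "mono g"
    and continuous_at_left: "\<And>x. continuous (at_left x) g"
begin

lemma tendsto_at_right_jump: "(g \<longlongrightarrow> g x + jump g x) (at_right x)"
proof -
  have bdd: "bdd_below (g ` {x<..})"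
    using mono by (auto intro!: bdd_belowI[of _ "g x"] simp: mono_def)
  have lim: "(g \<longlongrightarrow> Inf (g ` {x<..})) (at_right x)"
  proof (rule order_tendstoI)
    fix y assume "y < Inf (g ` {x<..})"
    then have "\<forall>s>x. y < g s"
      using cInf_lower[OF _ bdd] by force
    then show "\<forall>\<^sub>F s in at_right x. y < g s"
      by (auto simp: eventually_at_right_field intro: gt_ex)
  next
    fix y assume "Inf (g ` {x<..}) < y"
    then obtain s where s: "x < s" "g s < y"
      using cInf_lessD[of "g ` {x<..}" y] by auto
    then show "\<forall>\<^sub>F u in at_right x. g u < y"
      unfolding eventually_at_right_field
    proof (intro exI[of _ s] conjI allI impI)
      fix u assume "x < u" "u < s"
      then have "g u \<le> g s"
        by (simp add: monoD[OF mono])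
      with s(2) show "g u < y"
        by simp
    qed (rule s(1))
  qed
  then have "Lim (at_right x) g = Inf (g ` {x<..})"
    by (rule tendsto_Lim[OF trivial_limit_at_right_real])
  with lim show ?thesis
    by (simp add: jump_def)
qed

lemma add_jump_le:
  assumes "x < s"
  shows "g x + jump g x \<le> g s"
proof (rule tendsto_upperbound[OF tendsto_at_right_jump])
  show "\<forall>\<^sub>F u in at_right x. g u \<le> g s"
    using assms by (intro eventually_at_rightI[of x s]) (auto simp: monoD[OF mono])
qed simp

lemma jump_nonneg: "0 \<le> jump g x"
proof -
  have "g x \<le> g x + jump g x"
  proof (rule tendsto_lowerbound[OF tendsto_at_right_jump])
    show "\<forall>\<^sub>F u in at_right x. g x \<le> g u"
      by (intro eventually_at_rightI[of x "x + 1"]) (auto simp: monoD[OF mono])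
  qed simp
  then show ?thesis
    by simp
qed

lemma jump_eq_0_iff: "jump g x = 0 \<longleftrightarrow> x \<notin> Dg g"
  using jump_nonneg[of x] by (auto simp: Dg_def)

lemma jump_eq_0: "x \<notin> Dg g \<Longrightarrow> jump g x = 0"
  by (simp add: jump_eq_0_iff)

lemma neq_right_of_Dg:
  assumes "x \<in> Dg g" "x < s"
  shows "g s \<noteq> g x"
  using add_jump_le[OF assms(2)] assms(1) by (simp add: Dg_def)

lemma countable_Dg: "countable (Dg g)"
proof (rule countable_subset[OF _ mono_ctble_discont[OF mono]])
  show "Dg g \<subseteq> {x. \<not> isCont g x}"
  proof (intro subsetI CollectI notI)
    fix x assume "x \<in> Dg g" "isCont g x"
    then have "(g \<longlongrightarrow> g x) (at_right x)"
      by (simp add: isCont_def filterlim_at_split)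
    then have "g x + jump g x = g x"
      using tendsto_unique[OF trivial_limit_at_right_real tendsto_at_right_jump] by blast
    with \<open>x \<in> Dg g\<close> show False
      by (simp add: Dg_def)
  qed
qed

lemma neq_if_not_eventually_eq_at_right:
  assumes "\<not> (\<forall>\<^sub>F s in at_right x. g s = g x)" "x < s"
  shows "g s \<noteq> g x"
proof
  assume "g s = g x"
  then have "g u = g x" if "u \<in> {x<..<s}" for u
    using monoD[OF mono, of x u] monoD[OF mono, of u s] that by auto
  then have "\<forall>\<^sub>F u in at_right x. g u = g x"
    using \<open>x < s\<close> by (rule eventually_at_rightI)
  with assms(1) show False
    by contradiction
qed

lemma neq_if_not_eventually_eq_at_left:
  assumes "\<not> (\<forall>\<^sub>F s in at_left x. g s = g x)" "s < x"
  shows "g s \<noteq> g x"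
proof
  assume "g s = g x"
  then have "g u = g x" if "u \<in> {s<..<x}" for u
    using monoD[OF mono, of s u] monoD[OF mono, of u x] that by auto
  then have "\<forall>\<^sub>F u in at_left x. g u = g x"
    using \<open>s < x\<close> by (rule eventually_at_leftI)
  with assms(1) show False
    by contradiction
qed

lemma islimpt_neq_Diff_Dg_left:
  assumes "y < x" "\<not> (\<forall>\<^sub>F s in at_left x. g s = g x)" "{y<..<x} \<subseteq> X"
  shows "x islimpt (X \<inter> {s. g s \<noteq> g x} - Dg g)"
proof -
  have "{y<..<x} - Dg g \<subseteq> X \<inter> {s. g s \<noteq> g x} - Dg g"
    using assms(2,3) neq_if_not_eventually_eq_at_left by auto
  then show ?thesis
    using islimpt_Ioo_diff_countable(2)[OF countable_Dg assms(1)] islimpt_subset by blast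
qed

lemma islimpt_neq_Diff_Dg_right:
  assumes "x < y" "\<not> (\<forall>\<^sub>F s in at_right x. g s = g x)" "{x<..<y} \<subseteq> X"
  shows "x islimpt (X \<inter> {s. g s \<noteq> g x} - Dg g)"
proof -
  have "{x<..<y} - Dg g \<subseteq> X \<inter> {s. g s \<noteq> g x} - Dg g"
    using assms(2,3) neq_if_not_eventually_eq_at_right by auto
  then show ?thesis
    using islimpt_Ioo_diff_countable(1)[OF countable_Dg assms(1)] islimpt_subset by blast
qed

lemma Sup_component_Cg:
  assumes c: "c \<in> components (Cg g)" "bdd_above c" and "y \<in> c"
  shows "y < Sup c" "g (Sup c) = g y" "\<forall>\<^sub>F s in at_left (Sup c). g s = g (Sup c)"
proof -
  have "Sup c \<notin> Cg g"
    using open_Cg c by (rule Sup_component_notin)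
  moreover have "y \<in> Cg g"
    using in_components_subset[OF c(1)] \<open>y \<in> c\<close> by blast
  moreover have "y \<le> Sup c"
    using \<open>y \<in> c\<close> c(2) by (rule cSup_upper)
  ultimately show less: "y < Sup c"
    by (metis order_le_imp_less_or_eq)
  have "{y..<Sup c} \<subseteq> c"
    using in_components_connected[OF c(1)] c(2) \<open>y \<in> c\<close> by (rule connected_Ico_Sup_subset)
  then have "g s = g y" if "s \<in> {y<..<Sup c}" for s
  proof -
    from that have "s \<in> {y..<Sup c}"
      by simp
    with \<open>{y..<Sup c} \<subseteq> c\<close> have "s \<in> c"
      by blast
    with \<open>y \<in> c\<close> show ?thesis
      using Cg_connected_const[OF in_components_connected[OF c(1)] in_components_subset[OF c(1)]]
      by blast
  qed
  then have ev: "\<forall>\<^sub>F s in at_left (Sup c). g s = g y"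
    using less by (rule eventually_at_leftI)
  have "(g \<longlongrightarrow> g (Sup c)) (at_left (Sup c))"
    using continuous_at_left by (simp add: continuous_within)
  moreover have "(g \<longlongrightarrow> g y) (at_left (Sup c))"
    using ev by (rule tendsto_eventually)
  ultimately show eq: "g (Sup c) = g y"
    using tendsto_unique[OF trivial_limit_at_left_real] by blast
  show "\<forall>\<^sub>F s in at_left (Sup c). g s = g (Sup c)"
    using ev by (simp add: eq)
qed

lemma Inf_component_Cg:
  assumes c: "c \<in> components (Cg g)" "bdd_below c" and "y \<in> c" and "Inf c \<notin> Dg g"
  shows "\<forall>\<^sub>F s in at_right (Inf c). g s = g (Inf c)"
proof -
  have "Inf c \<notin> Cg g"
    using open_Cg c by (rule Inf_component_notin)
  moreover have "y \<in> Cg g"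
    using in_components_subset[OF c(1)] \<open>y \<in> c\<close> by blast
  moreover have "Inf c \<le> y"
    using \<open>y \<in> c\<close> c(2) by (rule cInf_lower)
  ultimately have less: "Inf c < y"
    by (metis order_le_imp_less_or_eq)
  have "{Inf c<..y} \<subseteq> c"
    using in_components_connected[OF c(1)] c(2) \<open>y \<in> c\<close> by (rule connected_Ioc_Inf_subset)
  then have "g s = g y" if "s \<in> {Inf c<..<y}" for s
  proof -
    from that have "s \<in> {Inf c<..y}"
      by simp
    with \<open>{Inf c<..y} \<subseteq> c\<close> have "s \<in> c"
      by blast
    with \<open>y \<in> c\<close> show ?thesis
      using Cg_connected_const[OF in_components_connected[OF c(1)] in_components_subset[OF c(1)]]
      by blast
  qed
  then have ev: "\<forall>\<^sub>F s in at_right (Inf c). g s = g y"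
    using less by (rule eventually_at_rightI)
  have "(g \<longlongrightarrow> g (Inf c)) (at_right (Inf c))"
    using tendsto_at_right_jump[of "Inf c"] jump_eq_0_iff[of "Inf c"] assms(4) by simp
  moreover have "(g \<longlongrightarrow> g y) (at_right (Inf c))"
    using ev by (rule tendsto_eventually)
  ultimately have eq: "g (Inf c) = g y"
    using tendsto_unique[OF trivial_limit_at_right_real] by blast
  show ?thesis
    using ev by (simp add: eq)
qed

lemma Nplus_iff:
  assumes "x \<notin> Cg g"
  shows "x \<in> Nplus g \<longleftrightarrow> x \<notin> Dg g \<and> (\<forall>\<^sub>F s in at_left x. g s = g x)"
proof
  assume "x \<in> Nplus g"
  then obtain c where c: "c \<in> components (Cg g)" "bdd_above c" and "x = Sup c" "x \<notin> Dg g"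
    unfolding Nplus_def by blast
  moreover obtain y where "y \<in> c"
    using in_components_nonempty[OF c(1)] by blast
  ultimately show "x \<notin> Dg g \<and> (\<forall>\<^sub>F s in at_left x. g s = g x)"
    using Sup_component_Cg(3) by blast
next
  assume x: "x \<notin> Dg g \<and> (\<forall>\<^sub>F s in at_left x. g s = g x)"
  then obtain y where "y < x" and const: "\<And>s. y < s \<Longrightarrow> s < x \<Longrightarrow> g s = g x"
    unfolding eventually_at_left_field by blast
  have sub: "{y<..<x} \<subseteq> Cg g"
  proof (rule open_subset_Cg)
    show "g s = g x" if "s \<in> {y<..<x}" for s
      using const that by simp
  qed simp
  define z where "z = (y + x) / 2"
  have z: "z \<in> {y<..<x}"
    using \<open>y < x\<close> by (simp add: z_def)
  have "connected_component_set (Cg g) z \<in> components (Cg g)"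
    using sub z by (auto simp: components_iff)
  with x Sup_connected_component_eq[OF assms sub z] show "x \<in> Nplus g"
    unfolding Nplus_def by force
qed

lemma Nminus_iff:
  assumes "x \<notin> Cg g"
  shows "x \<in> Nminus g \<longleftrightarrow> x \<notin> Dg g \<and> (\<forall>\<^sub>F s in at_right x. g s = g x)"
proof
  assume "x \<in> Nminus g"
  then obtain c where c: "c \<in> components (Cg g)" "bdd_below c" and "x = Inf c" "x \<notin> Dg g"
    unfolding Nminus_def by blast
  moreover obtain y where "y \<in> c"
    using in_components_nonempty[OF c(1)] by blast
  ultimately show "x \<notin> Dg g \<and> (\<forall>\<^sub>F s in at_right x. g s = g x)"
    using Inf_component_Cg by blast
next
  assume x: "x \<notin> Dg g \<and> (\<forall>\<^sub>F s in at_right x. g s = g x)"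
  then obtain y where "x < y" and const: "\<And>s. x < s \<Longrightarrow> s < y \<Longrightarrow> g s = g x"
    unfolding eventually_at_right_field by blast
  have sub: "{x<..<y} \<subseteq> Cg g"
  proof (rule open_subset_Cg)
    show "g s = g x" if "s \<in> {x<..<y}" for s
      using const that by simp
  qed simp
  define z where "z = (x + y) / 2"
  have z: "z \<in> {x<..<y}"
    using \<open>x < y\<close> by (simp add: z_def)
  have "connected_component_set (Cg g) z \<in> components (Cg g)"
    using sub z by (auto simp: components_iff)
  with x Inf_connected_component_eq[OF assms sub z] show "x \<in> Nminus g"
    unfolding Nminus_def by force
qed

lemma Nminus_imp_not_Nplus:
  assumes "x \<notin> Cg g" "x \<in> Nminus g"
  shows "x \<notin> Nplus g"
  using assms Nminus_iff Nplus_iff Cg_iff_eventually_left_right by blast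

lemma tstar_Cg:
  assumes "t \<in> Cg g" "b \<notin> Cg g" "t \<le> b"
  shows "t < tstar g t" "tstar g t \<le> b" "g (tstar g t) = g t" "tstar g t \<notin> Cg g"
    "tstar g t \<notin> Dg g \<Longrightarrow> tstar g t \<in> Nplus g"
proof -
  let ?c = "connected_component_set (Cg g) t"
  have c: "?c \<in> components (Cg g)"
    using assms(1) by (auto simp: components_iff)
  have t: "t \<in> ?c"
    using assms(1) by simp
  have less_b: "w < b" if "w \<in> ?c" for w
  proof (rule ccontr)
    assume "\<not> w < b"
    with assms(3) have "b \<in> {t..w}"
      by simp
    then have "b \<in> ?c"
      using connected_contains_Icc[OF connected_connected_component t that] by blast
    then show False
      using assms(2) connected_component_subset by blast
  qed
  then have bdd: "bdd_above ?c"
    by (meson bdd_aboveI less_imp_le)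
  have T: "tstar g t = Sup ?c"
    using assms(1) by (simp add: tstar_def)
  show "t < tstar g t" "g (tstar g t) = g t"
    unfolding T using Sup_component_Cg[OF c bdd t] by simp_all
  have "?c \<noteq> {}"
    using t by blast
  then show "tstar g t \<le> b"
    unfolding T using less_b by (meson cSup_least less_imp_le)
  show "tstar g t \<notin> Cg g"
    unfolding T using open_Cg c bdd by (rule Sup_component_notin)
  show "tstar g t \<in> Nplus g" if "tstar g t \<notin> Dg g"
    using that c bdd unfolding T Nplus_def by blast
qed

end

section \<open>The g-derivative of a function vanishing off D_g\<close>

lemma g_differentiable_iff_and_g_deriv_eq:
  assumes "\<And>L. has_g_deriv g a b u t L \<longleftrightarrow> L = L0 \<and> P"
  shows "g_differentiable g a b u t \<longleftrightarrow> P" "g_differentiable g a b u t \<Longrightarrow> g_deriv g a b u t = L0"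
  using assms by (auto simp: g_differentiable_def g_deriv_def)

definition approach_side :: "(real \<Rightarrow> real) \<Rightarrow> real \<Rightarrow> real set" where
  "approach_side g x = (if x \<in> Nminus g then {..<x} else if x \<in> Nplus g then {x<..} else UNIV)"

lemma not_islimpt_approach_side_Dg:
  assumes "\<not> (x \<in> Nminus g \<and> x islimpt (Dg g \<inter> {a..<x}))"
    and "\<not> (x \<in> Nplus g \<and> x islimpt (Dg g \<inter> {x<..b}))"
    and "\<not> (x \<notin> Ng g \<and> x islimpt (Dg g \<inter> {a..b}))"
  shows "\<not> x islimpt ({a..b} \<inter> Dg g \<inter> approach_side g x)"
proof -
  have "{a..b} \<inter> Dg g \<inter> approach_side g x \<subseteq>
      Dg g \<inter> (if x \<in> Nminus g then {a..<x} else if x \<in> Nplus g then {x<..b} else {a..b})"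
    by (auto simp: approach_side_def)
  moreover have "\<not> x islimpt
      (Dg g \<inter> (if x \<in> Nminus g then {a..<x} else if x \<in> Nplus g then {x<..b} else {a..b}))"
    using assms by (auto simp: Ng_def)
  ultimately show ?thesis
    using islimpt_subset by blast
qed

locale g_interval = mono_left_continuous +
  fixes a b :: real
  assumes a_less_b: "a < b"
    and a_notin_Nminus: "a \<notin> Nminus g"
    and b_notin: "b \<notin> Dg g \<union> Cg g \<union> Nplus g"
begin

lemma tstar_in_interval:
  assumes "t \<in> {a..b}"
  shows "tstar g t \<in> {t..b}" "g (tstar g t) = g t" "tstar g t \<notin> Cg g"
proof -
  have "t \<le> b" "b \<notin> Cg g"
    using assms b_notin by auto
  then show "tstar g t \<in> {t..b}" "g (tstar g t) = g t" "tstar g t \<notin> Cg g"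
    using tstar_Cg[of t b] by (cases "t \<in> Cg g"; force simp: tstar_def)+
qed

lemma islimpt_approach_domain_Diff_Dg:
  assumes "x \<in> {a..b}" "x \<notin> Cg g" "x \<notin> Dg g"
  shows "x islimpt ({a..b} \<inter> {s. g s \<noteq> g x} \<inter> approach_side g x - Dg g)"
proof -
  let ?X = "{a..b} \<inter> approach_side g x"
  have flat: "\<not> ((\<forall>\<^sub>F s in at_left x. g s = g x) \<and> (\<forall>\<^sub>F s in at_right x. g s = g x))"
    using assms(2) Cg_iff_eventually_left_right by blast
  have "{a..b} \<inter> {s. g s \<noteq> g x} \<inter> approach_side g x = ?X \<inter> {s. g s \<noteq> g x}"
    by blast
  moreover have "x islimpt (?X \<inter> {s. g s \<noteq> g x} - Dg g)"
  proof (cases "x \<in> Nminus g")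
    case True
    then have "x \<noteq> a"
      using a_notin_Nminus by blast
    with assms(1) have "a < x"
      by simp
    moreover have "\<not> (\<forall>\<^sub>F s in at_left x. g s = g x)"
      using True flat Nminus_iff[OF assms(2)] by blast
    moreover have "{a<..<x} \<subseteq> ?X"
    proof -
      have "approach_side g x = {..<x}"
        using True by (simp add: approach_side_def)
      moreover have "{a<..<x} \<subseteq> {a..b}"
        using assms(1) by auto
      ultimately show ?thesis
        by auto
    qed
    ultimately show ?thesis
      by (rule islimpt_neq_Diff_Dg_left)
  next
    case not_Nminus: False
    show ?thesis
    proof (cases "x \<in> Nplus g")
      case True
      then have "x \<noteq> b"
        using b_notin by blast
      with assms(1) have "x < b"
        by simp
      moreover have "\<not> (\<forall>\<^sub>F s in at_right x. g s = g x)"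
        using True flat Nplus_iff[OF assms(2)] by blast
      moreover have "{x<..<b} \<subseteq> ?X"
      proof -
        have "approach_side g x = {x<..}"
          using True not_Nminus by (simp add: approach_side_def)
        moreover have "{x<..<b} \<subseteq> {a..b}"
          using assms(1) by auto
        ultimately show ?thesis
          by auto
      qed
      ultimately show ?thesis
        by (rule islimpt_neq_Diff_Dg_right)
    next
      case False
      then have X: "?X = {a..b}"
        using not_Nminus by (simp add: approach_side_def)
      have not_left: "\<not> (\<forall>\<^sub>F s in at_left x. g s = g x)"
        using False assms(3) Nplus_iff[OF assms(2)] by blast
      have not_right: "\<not> (\<forall>\<^sub>F s in at_right x. g s = g x)"
        using not_Nminus assms(3) Nminus_iff[OF assms(2)] by blast
      show ?thesis
      proof (cases "x < b")
        case True
        have "{x<..<b} \<subseteq> ?X"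
          unfolding X using assms(1) by auto
        then show ?thesis
          by (rule islimpt_neq_Diff_Dg_right[OF True not_right])
      next
        case False
        with assms(1) a_less_b have "a < x"
          by simp
        have "{a<..<x} \<subseteq> ?X"
          unfolding X using assms(1) by auto
        then show ?thesis
          by (rule islimpt_neq_Diff_Dg_left[OF \<open>a < x\<close> not_left])
      qed
    qed
  qed
  ultimately show ?thesis
    by simp
qed

lemma has_g_deriv_iff_approach_side:
  assumes "t \<in> {a..b}" "tstar g t \<notin> Dg g"
  shows "has_g_deriv g a b u t L \<longleftrightarrow>
    (let T = tstar g t; F = at T within ({a..b} \<inter> {s. g s \<noteq> g T} \<inter> approach_side g T)
     in F \<noteq> bot \<and> ((\<lambda>s. (u s - u T) / of_real (g s - g T)) \<longlongrightarrow> L) F)"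
proof (cases "t \<in> Cg g")
  case True
  then have "tstar g t \<in> Nplus g"
    using tstar_Cg(5)[of t b] assms b_notin by auto
  moreover have "tstar g t \<notin> Nminus g"
    using calculation Nminus_imp_not_Nplus tstar_in_interval(3)[OF assms(1)] by blast
  ultimately show ?thesis
    using True by (simp add: has_g_deriv_def approach_side_def)
next
  case False
  with assms(2) have t: "tstar g t = t" "t \<notin> Dg g"
    by (simp_all add: tstar_def)
  have "t \<in> Nminus g \<Longrightarrow> t \<notin> Nplus g"
    using False Nminus_imp_not_Nplus by blast
  then have "{a..b} \<inter> {s. g s \<noteq> g t} \<inter> (if t \<in> Nplus g \<union> {a} then {t..} else UNIV)
      \<inter> (if t \<in> Nminus g \<union> {b} then {..t} else UNIV) - {t}
    = {a..b} \<inter> {s. g s \<noteq> g t} \<inter> approach_side g t - {t}"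
    using assms(1) a_notin_Nminus b_notin by (auto simp: approach_side_def less_le)
  then show ?thesis
    using False t by (simp add: has_g_deriv_def at_within_eq_if_Diff_eq)
qed

lemma has_g_deriv_vanishing_off_Dg_iff:
  assumes "t \<in> {a..b}" "tstar g t \<notin> Dg g" and vanish: "\<And>s. s \<notin> Dg g \<Longrightarrow> u s = 0"
  shows "has_g_deriv g a b u t L \<longleftrightarrow> L = 0 \<and>
    ((\<lambda>s. u s / of_real (g s - g t)) \<longlongrightarrow> 0)
      (at (tstar g t) within {a..b} \<inter> Dg g \<inter> {s. g s \<noteq> g t} \<inter> approach_side g (tstar g t))"
proof -
  define T where "T = tstar g t"
  have T: "T \<in> {a..b}" "g T = g t" "T \<notin> Cg g" "u T = 0"
    using tstar_in_interval[OF assms(1)] assms(1,2) vanish by (auto simp: T_def)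
  let ?E = "{a..b} \<inter> {s. g s \<noteq> g t} \<inter> approach_side g T"
  have "has_g_deriv g a b u t L \<longleftrightarrow>
      at T within ?E \<noteq> bot \<and> ((\<lambda>s. u s / of_real (g s - g t)) \<longlongrightarrow> L) (at T within ?E)"
    using has_g_deriv_iff_approach_side[OF assms(1,2), of u L] T
    by (simp add: T_def Let_def del: of_real_diff)
  also have "\<dots> \<longleftrightarrow> L = 0 \<and> ((\<lambda>s. u s / of_real (g s - g t)) \<longlongrightarrow> 0) (at T within ?E \<inter> Dg g)"
  proof (rule tendsto_within_vanishing_off_iff)
    show "T islimpt (?E - Dg g)"
      using islimpt_approach_domain_Diff_Dg[of T] T assms(2) by (simp add: T_def)
  qed (simp add: vanish)
  also have "?E \<inter> Dg g = {a..b} \<inter> Dg g \<inter> {s. g s \<noteq> g t} \<inter> approach_side g T"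
    by blast
  finally show ?thesis
    by (simp add: T_def)
qed

lemma has_g_deriv_at_jump_iff:
  assumes "t \<in> {a..b}" "tstar g t \<in> Dg g"
  shows "has_g_deriv g a b u t L \<longleftrightarrow>
    at (tstar g t) within {tstar g t<..b} \<noteq> bot \<and>
    (u \<longlongrightarrow> u (tstar g t) + L * of_real (jump g (tstar g t))) (at (tstar g t) within {tstar g t<..b})"
proof -
  define T J where "T = tstar g t" and "J = jump g T"
  have "J > 0"
    using assms(2) by (simp add: Dg_def T_def J_def)
  have "t \<in> Dg g \<union> Cg g"
    using assms(2) by (auto simp: tstar_def)
  have S: "{a..b} \<inter> {s. g s \<noteq> g T} \<inter> {T<..} = {T<..b}"
    using neq_right_of_Dg[of T] tstar_in_interval(1)[OF assms(1)] assms by (auto simp: T_def)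
  have "((\<lambda>s. g s - g T) \<longlongrightarrow> J) (at T within {T<..b})"
    using tendsto_diff[OF tendsto_at_right_jump[of T] tendsto_const[of "g T"]]
    by (auto simp: J_def intro: tendsto_within_subset)
  moreover have "\<forall>\<^sub>F s in at T within {T<..b}. g s - g T \<noteq> 0"
    using neq_right_of_Dg[of T] assms(2) by (simp add: eventually_at_filter T_def)
  ultimately have "((\<lambda>s. (u s - u T) / of_real (g s - g T)) \<longlongrightarrow> L) (at T within {T<..b}) \<longleftrightarrow>
      (u \<longlongrightarrow> u T + L * of_real J) (at T within {T<..b})"
    using \<open>J > 0\<close> by (intro tendsto_difference_quotient_iff) auto
  with \<open>t \<in> Dg g \<union> Cg g\<close> S show ?thesis
    by (simp add: has_g_deriv_def T_def J_def Let_def del: of_real_diff)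
qed

lemma has_g_deriv_vanishing_off_Dg_at_jump_iff:
  assumes "t \<in> {a..b}" "tstar g t \<in> Dg g" and vanish: "\<And>s. s \<notin> Dg g \<Longrightarrow> u s = 0"
  shows "has_g_deriv g a b u t L \<longleftrightarrow>
    L = - u (tstar g t) / of_real (jump g (tstar g t)) \<and>
    (u \<longlongrightarrow> 0) (at (tstar g t) within {a..b} \<inter> Dg g \<inter> {tstar g t<..})"
proof -
  define T J where "T = tstar g t" and "J = jump g T"
  have "T \<in> {t..b}" "T \<noteq> b"
    using tstar_in_interval(1)[OF assms(1)] assms(2) b_notin by (auto simp: T_def)
  then have "T islimpt ({T<..b} - Dg g)"
    using islimpt_Ioo_diff_countable(1)[OF countable_Dg, of T b] by (auto intro: islimpt_subset)
  then have "has_g_deriv g a b u t L \<longleftrightarrow>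
      u T + L * of_real J = 0 \<and> (u \<longlongrightarrow> 0) (at T within {T<..b} \<inter> Dg g)"
    unfolding has_g_deriv_at_jump_iff[OF assms(1,2)] T_def[symmetric] J_def[symmetric]
    using vanish by (intro tendsto_within_vanishing_off_iff) auto
  also have "u T + L * of_real J = 0 \<longleftrightarrow> L = - u T / of_real J"
  proof -
    have "(of_real J :: 'a) \<noteq> 0"
      using assms(2) by (simp add: Dg_def T_def J_def)
    then have "L = - u T / of_real J \<longleftrightarrow> L * of_real J = - u T"
      by (rule nonzero_eq_divide_eq)
    then show ?thesis
      by (simp add: eq_neg_iff_add_eq_0 add.commute)
  qed
  also have "{T<..b} \<inter> Dg g = {a..b} \<inter> Dg g \<inter> {T<..}"
    using \<open>T \<in> {t..b}\<close> assms(1) by auto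
  finally show ?thesis
    by (simp add: T_def J_def)
qed

lemma has_g_deriv_jump_product_iff:
  assumes "t \<in> {a..b}"
  shows "has_g_deriv g a b (\<lambda>s. f s * of_real (jump g s)) t L \<longleftrightarrow>
    L = - (f (tstar g t) * of_real (indicator (Dg g) (tstar g t))) \<and>
    (if tstar g t \<in> Dg g
     then ((\<lambda>s. f s * of_real (jump g s)) \<longlongrightarrow> 0)
       (at (tstar g t) within {a..b} \<inter> Dg g \<inter> {tstar g t<..})
     else ((\<lambda>s. f s * of_real (jump g s) / of_real (g s - g t)) \<longlongrightarrow> 0)
       (at (tstar g t) within {a..b} \<inter> Dg g \<inter> {s. g s \<noteq> g t} \<inter> approach_side g (tstar g t)))"
proof (cases "tstar g t \<in> Dg g")
  case True
  then have "jump g (tstar g t) \<noteq> 0"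
    by (simp add: jump_eq_0_iff)
  with True show ?thesis
    using has_g_deriv_vanishing_off_Dg_at_jump_iff[OF assms True, of "\<lambda>s. f s * of_real (jump g s)"]
    by (simp add: jump_eq_0)
next
  case False
  then show ?thesis
    using has_g_deriv_vanishing_off_Dg_iff[OF assms False, of "\<lambda>s. f s * of_real (jump g s)"]
    by (simp add: jump_eq_0)
qed

end

theorem proposition3p4:
  fixes g :: "real \<Rightarrow> real" and a b t :: real and f :: "real \<Rightarrow> 'a::real_normed_field"
  assumes mono_g: "mono g"
    and left_cont: "\<And>x. continuous (at_left x) g"
    and ab: "a < b"
    and a_N: "a \<notin> Nminus g"
    and b_N: "b \<notin> Dg g \<union> Cg g \<union> Nplus g"
    and t: "t \<in> {a..b}"
  defines "h \<equiv> (\<lambda>s. f s * of_real (jump g s))"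
    and "D1 \<equiv> {x \<in> {a..b} \<inter> Nminus g. x islimpt (Dg g \<inter> {a..<x})}"
    and "D2 \<equiv> {x \<in> {a..b} \<inter> Nplus g. x islimpt (Dg g \<inter> {x<..b})}"
    and "D3 \<equiv> {x \<in> {a..b} - (Ng g \<union> Dg g). x islimpt (Dg g \<inter> {a..b})}"
  shows
    "(tstar g t \<in> D1 \<union> D2 \<union> D3 \<longrightarrow>
        (g_differentiable g a b h t \<longleftrightarrow>
          ((\<lambda>s. f s * of_real (jump g s) / of_real (g s - g t)) \<longlongrightarrow> 0)
            (at (tstar g t) within
               ({a..b} \<inter> Dg g \<inter> {s. g s \<noteq> g t} \<inter>
                (if tstar g t \<in> Nminus g then {..<tstar g t}
                 else if tstar g t \<in> Nplus g then {tstar g t<..} else UNIV)))))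
     \<and> (tstar g t \<in> Dg g \<inter> {x. x islimpt (Dg g \<inter> {t<..b})} \<longrightarrow>
        (g_differentiable g a b h t \<longleftrightarrow>
          ((\<lambda>s. f s * of_real (jump g s)) \<longlongrightarrow> 0)
            (at (tstar g t) within ({a..b} \<inter> Dg g \<inter> {tstar g t<..}))))
     \<and> (tstar g t \<notin> D1 \<union> D2 \<union> D3 \<and>
        tstar g t \<notin> Dg g \<inter> {x. x islimpt (Dg g \<inter> {t<..b})} \<longrightarrow>
        g_differentiable g a b h t)
     \<and> (g_differentiable g a b h t \<longrightarrow>
        g_deriv g a b h t = - (f (tstar g t) * of_real (indicator (Dg g) (tstar g t))))"
proof -
  interpret g_interval g a b
    using assms by unfold_locales auto
  define T where "T = tstar g t"
  have T: "T \<in> {a..b}" "t \<le> T"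
    using tstar_in_interval(1)[OF t] t by (auto simp: T_def)
  note diff = g_differentiable_iff_and_g_deriv_eq
    [OF has_g_deriv_jump_product_iff[OF t, of f, folded h_def T_def]]
  have "T \<notin> D1 \<union> D2 \<union> D3" if "T \<in> Dg g"
    using that by (auto simp: D1_def D2_def D3_def Nminus_def Nplus_def)
  moreover have "\<not> T islimpt ({a..b} \<inter> Dg g \<inter> {s. g s \<noteq> g t} \<inter> approach_side g T)"
    if "T \<notin> D1 \<union> D2 \<union> D3" "T \<notin> Dg g"
  proof -
    have "\<not> T islimpt ({a..b} \<inter> Dg g \<inter> approach_side g T)"
      using that T(1) by (intro not_islimpt_approach_side_Dg) (auto simp: D1_def D2_def D3_def Ng_def)
    then show ?thesis
      by (rule contrapos_nn) (erule islimpt_subset, blast)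
  qed
  moreover have "\<not> T islimpt ({a..b} \<inter> Dg g \<inter> {T<..})"
    if "\<not> T islimpt (Dg g \<inter> {t<..b})"
    using that by (rule contrapos_nn) (erule islimpt_subset, use T in auto)
  ultimately show ?thesis
    unfolding T_def[symmetric] approach_side_def[of g T, symmetric] h_def[symmetric]
    using diff tendsto_within_not_islimpt by auto
qed

end
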